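(* Let $F$ be a graph of diameter $2$, $n=|V(F)|$, and let $l>n$ be an integer. Then $z_{i+1}\ge z_i+C_{l-2}^{n-2}$ for every $i\in\{1,2,\dots,l-1\}$.
   Context: All graphs are simple, finite, undirected. The $F$-degree of a vertex $v$ in $G$ is the number of subgraphs of $G$ (not necessarily induced) isomorphic to $F$ and containing $v$. $A_{2l-1}$ is the graph with vertex set $\{1,\dots,2l-1\}$ in which distinct $i,j$ are adjacent iff $|i-j|\le l-1$. $z_i$ denotes the $F$-degree of vertex $i$ in $A_{2l-1}$. $C_m^k=\frac{m!}{k!(m-k)!}$ for integers $m\ge k\ge0$, and $C_m^k=0$ otherwise. *)

theory Defs
  imports Main
begin

definition sgraph :: "'a set \<Rightarrow> 'a set set \<Rightarrow> bool" where
  "sgraph V E \<longleftrightarrow> finite V \<and> (\<forall>e\<in>E. \<exists>x y. x \<noteq> y \<and> x \<in> V \<and> y \<in> V \<and> e = {x, y})"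

definition walk_len :: "'a set \<Rightarrow> 'a set set \<Rightarrow> nat \<Rightarrow> 'a \<Rightarrow> 'a \<Rightarrow> bool" where
  "walk_len V E k x y \<longleftrightarrow> (\<exists>xs. length xs = Suc k \<and> set xs \<subseteq> V \<and> hd xs = x \<and> last xs = y
      \<and> (\<forall>i<k. {xs ! i, xs ! Suc i} \<in> E))"

definition connected_graph :: "'a set \<Rightarrow> 'a set set \<Rightarrow> bool" where
  "connected_graph V E \<longleftrightarrow> (\<forall>x\<in>V. \<forall>y\<in>V. \<exists>k. walk_len V E k x y)"

definition gdist :: "'a set \<Rightarrow> 'a set set \<Rightarrow> 'a \<Rightarrow> 'a \<Rightarrow> nat" where
  "gdist V E x y = (LEAST k. walk_len V E k x y)"

definition diameter :: "'a set \<Rightarrow> 'a set set \<Rightarrow> nat" where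
  "diameter V E = Max {gdist V E x y | x y. x \<in> V \<and> y \<in> V}"

definition has_diameter :: "'a set \<Rightarrow> 'a set set \<Rightarrow> nat \<Rightarrow> bool" where
  "has_diameter V E d \<longleftrightarrow> V \<noteq> {} \<and> connected_graph V E \<and> diameter V E = d"

definition graph_iso :: "'a set \<Rightarrow> 'a set set \<Rightarrow> 'b set \<Rightarrow> 'b set set \<Rightarrow> bool" where
  "graph_iso V1 E1 V2 E2 \<longleftrightarrow> (\<exists>f. bij_betw f V1 V2 \<and>
      (\<forall>x\<in>V1. \<forall>y\<in>V1. {x, y} \<in> E1 \<longleftrightarrow> {f x, f y} \<in> E2))"

text \<open>Subgraphs (not necessarily induced) of G = (V, E) isomorphic to F = (VF, EF).\<close>
definition iso_subgraphs :: "'a set \<Rightarrow> 'a set set \<Rightarrow> 'b set \<Rightarrow> 'b set set \<Rightarrow> ('b set \<times> 'b set set) set" where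
  "iso_subgraphs VF EF V E = {(W, E'). W \<subseteq> V \<and> E' \<subseteq> E \<and> (\<forall>e\<in>E'. e \<subseteq> W) \<and> graph_iso VF EF W E'}"

definition F_degree :: "'a set \<Rightarrow> 'a set set \<Rightarrow> 'b set \<Rightarrow> 'b set set \<Rightarrow> 'b \<Rightarrow> nat" where
  "F_degree VF EF V E v = card {(W, E') \<in> iso_subgraphs VF EF V E. v \<in> W}"

text \<open>The graph A_{2l-1}: vertices 1..2l-1, i ~ j iff i \<noteq> j and |i-j| \<le> l-1.\<close>
definition A_verts :: "nat \<Rightarrow> nat set" where
  "A_verts l = {1..2*l-1}"

definition A_edges :: "nat \<Rightarrow> nat set set" where
  "A_edges l = {{i, j} | i j. i \<in> A_verts l \<and> j \<in> A_verts l \<and> i \<noteq> j \<and> i \<le> j + (l - 1) \<and> j \<le> i + (l - 1)}"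

end

theory Submission
  imports Defs "HOL-Combinatorics.Transposition"
begin

text \<open>Write \<open>\<tau>\<close> for the transposition of \<open>i\<close> and \<open>i + 1\<close>. A copy of \<open>F\<close> through \<open>i\<close>
  either contains \<open>i + 1\<close>, or it avoids \<open>i + 1\<close> and \<open>\<tau>\<close> moves it to a copy through \<open>i + 1\<close>
  that avoids \<open>i\<close>: as \<open>i < l\<close>, the vertex \<open>i + 1\<close> is adjacent to every vertex other than
  itself that \<open>i\<close> is adjacent to. This injection of the copies through \<open>i\<close> into those
  through \<open>i + 1\<close> misses every copy that avoids \<open>i\<close> and uses the edge \<open>{i + 1, i + l}\<close>,
  because \<open>{i, i + l}\<close> is not an edge. The window \<open>{i + 1..i + l}\<close> is a clique, so every
  \<open>(n - 2)\<close>-subset \<open>T\<close> of \<open>{i + 2..i + l - 1}\<close> carries such a copy with vertex set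
  \<open>{i + 1, i + l} \<union> T\<close>, mapping some edge of \<open>F\<close> onto \<open>{i + 1, i + l}\<close>.\<close>

definition copy_image ::
    "('a \<Rightarrow> 'b) \<Rightarrow> 'a set \<times> 'a set set \<Rightarrow> 'b set \<times> 'b set set" where
  "copy_image h = map_prod (image h) (image (image h))"

lemma fst_copy_image [simp]: "fst (copy_image h c) = h ` fst c"
  by (simp add: copy_image_def)

lemma snd_copy_image [simp]: "snd (copy_image h c) = image h ` snd c"
  by (simp add: copy_image_def)

lemma inj_copy_image:
  assumes "inj h"
  shows "inj (copy_image h)"
proof -
  have "inj (image h)"
    using inj_on_image[of h UNIV] assms by simp
  moreover from this have "inj (image (image h))"
    using inj_on_image[of "image h" UNIV] by simp
  ultimately show ?thesis
    unfolding copy_image_def using map_prod_inj_on by fastforce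
qed

lemma graph_iso_image:
  assumes iso: "graph_iso V1 E1 W E" and edges: "\<forall>e\<in>E. e \<subseteq> W" and h: "inj_on h W"
  shows "graph_iso V1 E1 (h ` W) (image h ` E)"
proof -
  obtain f where f: "bij_betw f V1 W"
    and f_edges: "\<forall>x\<in>V1. \<forall>y\<in>V1. {x, y} \<in> E1 \<longleftrightarrow> {f x, f y} \<in> E"
    using iso unfolding graph_iso_def by blast
  have image_mem: "h ` e \<in> image h ` E \<longleftrightarrow> e \<in> E" if "e \<subseteq> W" for e
    using that edges by (auto simp: inj_on_image_eq_iff[OF h])
  have "bij_betw (h \<circ> f) V1 (h ` W)"
    using bij_betw_trans[OF f inj_on_imp_bij_betw[OF h]] .
  moreover have "{f x, f y} \<in> E \<longleftrightarrow> {(h \<circ> f) x, (h \<circ> f) y} \<in> image h ` E" if "x \<in> V1" "y \<in> V1" for x y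
    using image_mem[of "{f x, f y}"] that bij_betwE[OF f] by simp
  ultimately show ?thesis
    using f_edges unfolding graph_iso_def by blast
qed

lemma copy_image_in_iso_subgraphs:
  assumes c: "c \<in> iso_subgraphs VF EF V E" and h: "inj_on h (fst c)"
    and verts: "h ` fst c \<subseteq> V'" and edges: "\<forall>e\<in>snd c. h ` e \<in> E'"
  shows "copy_image h c \<in> iso_subgraphs VF EF V' E'"
proof (cases c)
  case (Pair W Es)
  then have "graph_iso VF EF (h ` W) (image h ` Es)"
    using c h graph_iso_image unfolding iso_subgraphs_def by auto
  then show ?thesis
    using Pair c verts edges unfolding iso_subgraphs_def copy_image_def by fastforce
qed

lemma self_in_iso_subgraphs:
  assumes "sgraph V E"
  shows "(V, E) \<in> iso_subgraphs V E V E"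
proof -
  have "graph_iso V E V E"
    unfolding graph_iso_def by (rule exI[of _ id]) simp
  then show ?thesis
    using assms unfolding iso_subgraphs_def sgraph_def by auto
qed

lemma bij_image_in_iso_subgraphs:
  assumes "sgraph VF EF" and f: "bij_betw f VF W" and "W \<subseteq> V" and "\<forall>e\<in>EF. f ` e \<in> E"
  shows "(W, image f ` EF) \<in> iso_subgraphs VF EF V E"
proof -
  have "copy_image f (VF, EF) \<in> iso_subgraphs VF EF V E"
    using assms bij_betw_imp_inj_on[OF f] bij_betw_imp_surj_on[OF f]
    by (intro copy_image_in_iso_subgraphs[OF self_in_iso_subgraphs]) auto
  then show ?thesis
    using bij_betw_imp_surj_on[OF f] by (simp add: copy_image_def)
qed

lemma bij_betw_extend_pair:
  assumes "finite A" "card A = card B" "p \<in> A" "q \<in> A" "p \<noteq> q" "a \<in> B" "b \<in> B" "a \<noteq> b"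
  obtains f where "bij_betw f A B" "f p = a" "f q = b"
proof -
  have "card (A - {p, q}) = card (B - {a, b})"
    using assms by (simp add: card_Diff_subset)
  moreover have "finite B"
    using assms card_ge_0_finite by force
  ultimately obtain g where g: "bij_betw g (A - {p, q}) (B - {a, b})"
    using assms finite_same_card_bij by blast
  define f where "f = g(p := a, q := b)"
  have "bij_betw f (A - {p, q}) (B - {a, b})"
    using g by (rule bij_betw_cong[THEN iffD1, rotated]) (simp add: f_def)
  moreover have "bij_betw f {p, q} {a, b}"
    using assms by (simp add: f_def bij_betw_def)
  ultimately have "bij_betw f ((A - {p, q}) \<union> {p, q}) ((B - {a, b}) \<union> {a, b})"
    by (rule bij_betw_combine) blast
  moreover have "(A - {p, q}) \<union> {p, q} = A" "(B - {a, b}) \<union> {a, b} = B"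
    using assms by auto
  ultimately show ?thesis
    using that assms by (simp add: f_def)
qed

lemma sgraph_edgeD:
  assumes "sgraph V E" "{x, y} \<in> E"
  shows "x \<in> V" "y \<in> V" "x \<noteq> y"
proof -
  obtain u v where "u \<noteq> v" "u \<in> V" "v \<in> V" "{x, y} = {u, v}"
    using assms unfolding sgraph_def by blast
  then show "x \<in> V" "y \<in> V" "x \<noteq> y"
    by (auto simp: doubleton_eq_iff)
qed

lemma has_diameter_obtains_edge:
  assumes "sgraph V E" "has_diameter V E d" "0 < d"
  obtains p q where "{p, q} \<in> E"
proof -
  define D where "D = {gdist V E x y | x y. x \<in> V \<and> y \<in> V}"
  have "D = (\<lambda>(x, y). gdist V E x y) ` (V \<times> V)"
    unfolding D_def by auto
  moreover have "finite V"
    using assms(1) by (simp add: sgraph_def)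
  moreover have "D \<noteq> {}"
    using assms(2) unfolding D_def has_diameter_def by auto
  ultimately have "Max D \<in> D"
    by simp
  moreover have "Max D = d"
    using assms(2) unfolding D_def has_diameter_def diameter_def by simp
  ultimately obtain x y where xy: "x \<in> V" "y \<in> V" "gdist V E x y = d"
    unfolding D_def by auto
  have "\<exists>k. walk_len V E k x y"
    using assms(2) xy unfolding has_diameter_def connected_graph_def by blast
  then have "walk_len V E (gdist V E x y) x y"
    unfolding gdist_def by (rule LeastI_ex)
  then obtain xs where "{xs ! 0, xs ! Suc 0} \<in> E"
    using xy(3) \<open>0 < d\<close> unfolding walk_len_def by blast
  then show ?thesis
    using that by blast
qed

lemma A_edge_iff:
  "{u, v} \<in> A_edges l \<longleftrightarrow>
     u \<in> A_verts l \<and> v \<in> A_verts l \<and> u \<noteq> v \<and> u \<le> v + (l - 1) \<and> v \<le> u + (l - 1)"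
  unfolding A_edges_def by (auto simp: doubleton_eq_iff)

lemma A_edgeE:
  assumes "e \<in> A_edges l"
  obtains u v where "e = {u, v}" "{u, v} \<in> A_edges l"
  using assms unfolding A_edges_def by blast

lemma finite_iso_subgraphs_A: "finite (iso_subgraphs VF EF (A_verts l) (A_edges l))"
proof -
  have "A_edges l \<subseteq> Pow (A_verts l)"
    unfolding A_edges_def by blast
  then have "iso_subgraphs VF EF (A_verts l) (A_edges l) \<subseteq> Pow (A_verts l) \<times> Pow (Pow (A_verts l))"
    unfolding iso_subgraphs_def by auto
  then show ?thesis
    by (rule finite_subset) (simp add: A_verts_def)
qed

lemma A_edge_window:
  assumes "1 \<le> a" "a \<le> l" "u \<in> {a..<a + l}" "v \<in> {a..<a + l}" "u \<noteq> v"
  shows "{u, v} \<in> A_edges l"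
  using assms unfolding A_edge_iff A_verts_def by auto

lemma A_edge_transpose:
  assumes "1 \<le> i" "i < l" "{u, v} \<in> A_edges l" "u \<noteq> Suc i" "v \<noteq> Suc i"
  shows "{transpose i (Suc i) u, transpose i (Suc i) v} \<in> A_edges l"
  using assms unfolding A_edge_iff A_verts_def transpose_def by auto

lemma transpose_copy_in_iso_subgraphs_A:
  assumes "1 \<le> i" "i < l" and c: "c \<in> iso_subgraphs VF EF (A_verts l) (A_edges l)" and "Suc i \<notin> fst c"
  shows "copy_image (transpose i (Suc i)) c \<in> iso_subgraphs VF EF (A_verts l) (A_edges l)"
proof (rule copy_image_in_iso_subgraphs[OF c])
  have verts: "fst c \<subseteq> A_verts l" and edges: "\<forall>e\<in>snd c. e \<subseteq> fst c \<and> e \<in> A_edges l"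
    using c unfolding iso_subgraphs_def by (auto simp: case_prod_unfold)
  show "inj_on (transpose i (Suc i)) (fst c)"
    by simp
  show "transpose i (Suc i) ` fst c \<subseteq> A_verts l"
    using verts assms by (auto simp: A_verts_def transpose_def)
  show "\<forall>e\<in>snd c. transpose i (Suc i) ` e \<in> A_edges l"
  proof
    fix e assume e: "e \<in> snd c"
    then obtain u v where uv: "e = {u, v}" "{u, v} \<in> A_edges l"
      using edges A_edgeE by blast
    moreover have "u \<noteq> Suc i" "v \<noteq> Suc i"
      using e uv edges \<open>Suc i \<notin> fst c\<close> by auto
    ultimately show "transpose i (Suc i) ` e \<in> A_edges l"
      using A_edge_transpose[OF \<open>1 \<le> i\<close> \<open>i < l\<close>] by simp
  qed
qed

lemma long_edge_notin_transpose_copy: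
  assumes i: "1 \<le> i" "i < l" and c: "c \<in> iso_subgraphs VF EF (A_verts l) (A_edges l)"
  shows "{Suc i, i + l} \<notin> snd (copy_image (transpose i (Suc i)) c)"
proof
  assume "{Suc i, i + l} \<in> snd (copy_image (transpose i (Suc i)) c)"
  then obtain e where e: "e \<in> snd c" "transpose i (Suc i) ` e = {Suc i, i + l}"
    by auto
  have "e = transpose i (Suc i) ` transpose i (Suc i) ` e"
    by (simp add: image_image)
  also have "\<dots> = transpose i (Suc i) ` {Suc i, i + l}"
    using e(2) by simp
  also have "\<dots> = {i, i + l}"
    using i by (auto simp: transpose_def)
  finally have "{i, i + l} \<in> A_edges l"
    using e(1) c unfolding iso_subgraphs_def by (auto simp: case_prod_unfold)
  then show False
    using i by (auto simp: A_edge_iff)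
qed

definition long_edge_copies ::
    "'a set \<Rightarrow> 'a set set \<Rightarrow> nat \<Rightarrow> nat \<Rightarrow> (nat set \<times> nat set set) set" where
  "long_edge_copies VF EF l i =
     {(W, E') \<in> iso_subgraphs VF EF (A_verts l) (A_edges l). i \<notin> W \<and> {Suc i, i + l} \<in> E'}"

lemma window_copy_in_long_edge_copies:
  assumes F: "sgraph VF EF" and pq: "{p, q} \<in> EF" and i: "1 \<le> i" "i < l"
    and T: "T \<subseteq> {i + 2..i + l - 1}" "card T = card VF - 2"
  shows "insert (Suc i) (insert (i + l) T) \<in> fst ` long_edge_copies VF EF l i"
proof -
  define W where "W = insert (Suc i) (insert (i + l) T)"
  have p_q: "p \<in> VF" "q \<in> VF" "p \<noteq> q"
    using sgraph_edgeD[OF F pq] by auto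
  have "finite VF"
    using F by (simp add: sgraph_def)
  then have "2 \<le> card VF"
    using card_mono[of VF "{p, q}"] p_q by simp
  moreover have "finite T" "Suc i \<notin> T" "i + l \<notin> T"
    using T(1) finite_subset i by auto
  ultimately have "card W = card VF"
    using T(2) i unfolding W_def by simp
  moreover have "Suc i \<in> W" "i + l \<in> W" "Suc i \<noteq> i + l"
    using i unfolding W_def by auto
  ultimately obtain f where f: "bij_betw f VF W" "f p = Suc i" "f q = i + l"
    using bij_betw_extend_pair[OF \<open>finite VF\<close> _ p_q] by metis
  have window: "W \<subseteq> {Suc i..<Suc i + l}"
    using T(1) i unfolding W_def by force
  have "f ` e \<in> A_edges l" if "e \<in> EF" for e
  proof -
    obtain x y where "e = {x, y}" "x \<in> VF" "y \<in> VF" "x \<noteq> y"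
      using F \<open>e \<in> EF\<close> unfolding sgraph_def by blast
    moreover have "f x \<noteq> f y"
      using calculation bij_betw_imp_inj_on[OF f(1)] by (auto dest: inj_onD)
    moreover have "f x \<in> {Suc i..<Suc i + l}" "f y \<in> {Suc i..<Suc i + l}"
      using calculation window bij_betwE[OF f(1)] by auto
    ultimately show ?thesis
      using A_edge_window[of "Suc i" l "f x" "f y"] i by simp
  qed
  moreover have "{Suc i..<Suc i + l} \<subseteq> A_verts l"
    using i unfolding A_verts_def by auto
  then have "W \<subseteq> A_verts l"
    using window by blast
  ultimately have "(W, image f ` EF) \<in> iso_subgraphs VF EF (A_verts l) (A_edges l)"
    using bij_image_in_iso_subgraphs[OF F f(1)] by blast
  moreover have "{Suc i, i + l} \<in> image f ` EF"
    by (rule rev_image_eqI[OF pq]) (simp add: f)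
  moreover have "i \<notin> W"
    using window by auto
  ultimately show ?thesis
    unfolding long_edge_copies_def W_def[symmetric]
    by (intro image_eqI[where x = "(W, image f ` EF)"]) auto
qed

lemma card_long_edge_copies_ge:
  assumes F: "sgraph VF EF" and pq: "{p, q} \<in> EF" and i: "1 \<le> i" "i < l"
  shows "(l - 2) choose (card VF - 2) \<le> card (long_edge_copies VF EF l i)"
proof -
  define M where "M = {i + 2..i + l - 1}"
  define W where "W T = insert (Suc i) (insert (i + l) T)" for T
  let ?TT = "{T. T \<subseteq> M \<and> card T = card VF - 2}"
  have "inj_on W ?TT"
  proof (rule inj_on_inverseI)
    fix T assume "T \<in> ?TT"
    moreover have "Suc i \<notin> M" "i + l \<notin> M"
      unfolding M_def by auto
    ultimately show "W T - {Suc i, i + l} = T"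
      unfolding W_def by auto
  qed
  then have "(l - 2) choose (card VF - 2) = card (W ` ?TT)"
    using n_subsets[of M "card VF - 2"] i unfolding M_def by (simp add: card_image)
  also have "\<dots> \<le> card (fst ` long_edge_copies VF EF l i)"
  proof (rule card_mono)
    show "finite (fst ` long_edge_copies VF EF l i)"
      unfolding long_edge_copies_def by (rule finite_imageI, rule finite_subset[OF _ finite_iso_subgraphs_A]) auto
    show "W ` ?TT \<subseteq> fst ` long_edge_copies VF EF l i"
      using window_copy_in_long_edge_copies[OF F pq i] unfolding W_def M_def by blast
  qed
  also have "\<dots> \<le> card (long_edge_copies VF EF l i)"
    by (rule card_image_le, unfold long_edge_copies_def, rule finite_subset[OF _ finite_iso_subgraphs_A]) auto
  finally show ?thesis .
qed

lemma F_degree_Suc_ge: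
  assumes i: "1 \<le> i" "i < l"
  shows "F_degree VF EF (A_verts l) (A_edges l) i + card (long_edge_copies VF EF l i)
           \<le> F_degree VF EF (A_verts l) (A_edges l) (Suc i)"
proof -
  let ?S = "iso_subgraphs VF EF (A_verts l) (A_edges l)"
  let ?\<tau> = "copy_image (transpose i (Suc i))"
  have degree: "F_degree VF EF (A_verts l) (A_edges l) v = card {c \<in> ?S. v \<in> fst c}" for v
    unfolding F_degree_def by (simp add: case_prod_unfold)
  define through_both where "through_both = {c \<in> ?S. i \<in> fst c \<and> Suc i \<in> fst c}"
  define through_i_only where "through_i_only = {c \<in> ?S. i \<in> fst c \<and> Suc i \<notin> fst c}"
  define long where "long = long_edge_copies VF EF l i"
  have fin: "finite through_both" "finite through_i_only" "finite long"
    using finite_iso_subgraphs_A unfolding through_both_def through_i_only_def long_def long_edge_copies_def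
    by (auto intro: rev_finite_subset)
  have long: "c \<in> ?S \<and> i \<notin> fst c \<and> {Suc i, i + l} \<in> snd c" if "c \<in> long" for c
    using that unfolding long_def long_edge_copies_def by (auto simp: case_prod_unfold)
  have shifted: "?\<tau> c \<in> ?S \<and> i \<notin> fst (?\<tau> c) \<and> Suc i \<in> fst (?\<tau> c)"
    if "c \<in> through_i_only" for c
  proof -
    have c: "c \<in> ?S" "i \<in> fst c" "Suc i \<notin> fst c"
      using that unfolding through_i_only_def by auto
    then show ?thesis
      using transpose_copy_in_iso_subgraphs_A[OF i c(1,3)] by (simp add: in_transpose_image_iff)
  qed
  have "{c \<in> ?S. i \<in> fst c} = through_both \<union> through_i_only" "through_both \<inter> through_i_only = {}"
    unfolding through_both_def through_i_only_def by auto
  then have "card {c \<in> ?S. i \<in> fst c} = card through_both + card through_i_only"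
    using fin by (simp add: card_Un_disjoint)
  also have "\<dots> + card long = card (through_both \<union> ?\<tau> ` through_i_only \<union> long)"
  proof -
    have "?\<tau> ` through_i_only \<inter> long = {}"
      using long_edge_notin_transpose_copy[OF i] long unfolding through_i_only_def by blast
    moreover have "through_both \<inter> (?\<tau> ` through_i_only \<union> long) = {}"
      using shifted long unfolding through_both_def by blast
    moreover have "card (?\<tau> ` through_i_only) = card through_i_only"
      using inj_copy_image[of "transpose i (Suc i)"] by (simp add: card_image inj_on_subset)
    ultimately show ?thesis
      using fin by (simp add: card_Un_disjoint Un_assoc)
  qed
  also have "\<dots> \<le> card {c \<in> ?S. Suc i \<in> fst c}"
  proof (rule card_mono)
    show "finite {c \<in> ?S. Suc i \<in> fst c}"
      by (rule finite_subset[OF _ finite_iso_subgraphs_A]) auto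
    have "Suc i \<in> fst c" if "c \<in> long" for c
      using long[OF that] unfolding iso_subgraphs_def by (auto simp: case_prod_unfold)
    then show "through_both \<union> ?\<tau> ` through_i_only \<union> long \<subseteq> {c \<in> ?S. Suc i \<in> fst c}"
      using shifted long unfolding through_both_def by blast
  qed
  finally show ?thesis
    unfolding degree long_def .
qed

theorem lemma2:
  fixes VF :: "'a set" and EF :: "'a set set" and l :: nat
  assumes "sgraph VF EF"
    and "has_diameter VF EF 2"
    and "l > card VF"
  shows "\<forall>i\<in>{1..l-1}. F_degree VF EF (A_verts l) (A_edges l) (i + 1)
           \<ge> F_degree VF EF (A_verts l) (A_edges l) i + ((l - 2) choose (card VF - 2))"
proof
  fix i assume "i \<in> {1..l-1}"
  then have i: "1 \<le> i" "i < l"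
    by auto
  obtain p q where "{p, q} \<in> EF"
    using has_diameter_obtains_edge[OF assms(1,2)] by auto
  then have "(l - 2) choose (card VF - 2) \<le> card (long_edge_copies VF EF l i)"
    using card_long_edge_copies_ge[OF assms(1) _ i] by blast
  then show "F_degree VF EF (A_verts l) (A_edges l) (i + 1)
           \<ge> F_degree VF EF (A_verts l) (A_edges l) i + ((l - 2) choose (card VF - 2))"
    using F_degree_Suc_ge[OF i, of VF EF] by simp
qed

end
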